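(* Let $G$ be a finite graph having at least one sink-free orientation. Consider the algorithm: orient each edge of $G$ independently and uniformly at random; while there is at least one sink, re-orient independently and uniformly at random all edges incident to some sink (all sinks present at that moment simultaneously); output the current orientation. Let $Z_{\mathrm{sink},0}$ be the number of sink-free orientations of $G$ and $Z_{\mathrm{sink},1}$ the number of orientations of $G$ with exactly one sink. Then the expected total number of resampled sinks (summed over all rounds) is $\frac{Z_{\mathrm{sink},1}}{Z_{\mathrm{sink},0}}$.
   Context: An orientation assigns to each edge $\{u,v\}$ one of the directions $(u,v)$ or $(v,u)$. A sink is a vertex $v$ such that every edge incident to $v$ is directed towards $v$. A sink-free orientation is one with no sink. *)

theory Defs
  imports "HOL-Probability.Probability"
begin

definition finite_graph :: "'a set \<Rightarrow> 'a set set \<Rightarrow> bool" where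
  "finite_graph V E \<longleftrightarrow> finite V \<and> (\<forall>e\<in>E. e \<subseteq> V \<and> card e = 2)"

text \<open>An orientation assigns to each edge its head (the vertex it points to);
  outside E the value is fixed to undefined so that the set of orientations is finite.\<close>
definition orientations :: "'a set set \<Rightarrow> ('a set \<Rightarrow> 'a) set" where
  "orientations E = {\<sigma>. (\<forall>e\<in>E. \<sigma> e \<in> e) \<and> (\<forall>e. e \<notin> E \<longrightarrow> \<sigma> e = undefined)}"

definition sinks :: "'a set \<Rightarrow> 'a set set \<Rightarrow> ('a set \<Rightarrow> 'a) \<Rightarrow> 'a set" where
  "sinks V E \<sigma> = {v\<in>V. \<forall>e\<in>E. v \<in> e \<longrightarrow> \<sigma> e = v}"

definition Z_sink :: "nat \<Rightarrow> 'a set \<Rightarrow> 'a set set \<Rightarrow> nat" where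
  "Z_sink k V E = card {\<sigma>\<in>orientations E. card (sinks V E \<sigma>) = k}"

definition resample :: "'a set set \<Rightarrow> 'a set \<Rightarrow> ('a set \<Rightarrow> 'a) \<Rightarrow> ('a set \<Rightarrow> 'a) pmf" where
  "resample E S \<sigma> = map_pmf (\<lambda>t e. if e \<in> E \<and> e \<inter> S \<noteq> {} then t e else \<sigma> e)
                              (pmf_of_set (orientations E))"

text \<open>One round of the algorithm; once sink-free the state stays fixed (output).\<close>
definition prs_step :: "'a set \<Rightarrow> 'a set set \<Rightarrow> ('a set \<Rightarrow> 'a) \<Rightarrow> ('a set \<Rightarrow> 'a) pmf" where
  "prs_step V E \<sigma> = (if sinks V E \<sigma> = {} then return_pmf \<sigma> else resample E (sinks V E \<sigma>) \<sigma>)"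

definition prs_dist :: "'a set \<Rightarrow> 'a set set \<Rightarrow> nat \<Rightarrow> ('a set \<Rightarrow> 'a) pmf" where
  "prs_dist V E t = ((\<lambda>p. bind_pmf p (prs_step V E)) ^^ t) (pmf_of_set (orientations E))"

end

theory Submission imports Defs begin

text \<open>Write \<open>N(T)\<close> for the closed neighbourhood of a vertex set \<open>T\<close>, \<open>W(U)\<close> for the number of
  orientations all of whose sinks lie in \<open>U\<close>, and \<open>K(U)\<close> for the number with exactly one sink
  outside \<open>U\<close>. The partial rejection sampling property: at every round, conditioned on its sink
  set \<open>T\<close>, the orientation is uniform among those with sink set \<open>T\<close>, and after resampling it is
  uniform among the \<open>W(N(T))\<close> orientations with sinks inside \<open>N(T)\<close>. A double counting over
  orientations that agree off the edges at \<open>T\<close> then shows that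
  \<open>\<Phi>(T) = |T| + Z1/Z0 - K(N(T))/W(N(T))\<close> satisfies \<open>E[\<Phi>(T') | T] = \<Phi>(T) - |T|\<close>, with
  \<open>\<Phi>({}) = 0\<close> and \<open>E \<Phi> = Z1/Z0\<close> for the uniform start. As each round is sink-free with
  probability at least \<open>Z0/2^|E|\<close>, \<open>E \<Phi>\<close> tends to \<open>0\<close>, and telescoping gives the claim.\<close>

lemma sum_if_one_eq_card:
  "finite A \<Longrightarrow> (\<Sum>x\<in>A. if P x then (1::real) else 0) = real (card {x\<in>A. P x})"
  by (simp add: sum.inter_filter[symmetric])

lemma sum_inverse_card_fibres:
  assumes "finite A"
  shows "(\<Sum>x\<in>{x\<in>A. P (f x)}. 1 / real (card {y\<in>A. f y = f x})) = real (card {T\<in>f ` A. P T})"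
proof -
  have "(\<Sum>x\<in>{x\<in>A. P (f x)}. 1 / real (card {y\<in>A. f y = f x})) =
        (\<Sum>T\<in>{T\<in>f ` A. P T}. \<Sum>x\<in>{x\<in>{x\<in>A. P (f x)}. f x = T}. 1 / real (card {y\<in>A. f y = f x}))"
    by (rule sum.group[symmetric]) (use assms in auto)
  also have "\<dots> = (\<Sum>T\<in>{T\<in>f ` A. P T}. 1)"
  proof (rule sum.cong[OF refl])
    fix T assume T: "T \<in> {T\<in>f ` A. P T}"
    then have fibre: "{x\<in>{x\<in>A. P (f x)}. f x = T} = {y\<in>A. f y = T}" by auto
    have "card {y\<in>A. f y = T} > 0"
      using T assms by (auto simp: card_gt_0_iff)
    then show "(\<Sum>x\<in>{x\<in>{x\<in>A. P (f x)}. f x = T}. 1 / real (card {y\<in>A. f y = f x})) = 1"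
      unfolding fibre by simp
  qed
  finally show ?thesis by simp
qed

lemma sum_fibre_average:
  assumes "finite A" and p: "\<And>x y. x \<in> A \<Longrightarrow> y \<in> A \<Longrightarrow> f x = f y \<Longrightarrow> p x = p y"
  shows "(\<Sum>x\<in>A. p x * h x) =
         (\<Sum>x\<in>A. p x * (\<Sum>y\<in>{y\<in>A. f y = f x}. h y) / real (card {y\<in>A. f y = f x}))"
proof -
  have "(\<Sum>x\<in>A. p x * (\<Sum>y\<in>{y\<in>A. f y = f x}. h y) / real (card {y\<in>A. f y = f x})) =
        (\<Sum>x\<in>A. \<Sum>y\<in>A. if f y = f x then p x * h y / real (card {z\<in>A. f z = f x}) else 0)"
    using assms(1) by (intro sum.cong refl)
      (simp add: sum.inter_filter[symmetric] sum_distrib_left sum_divide_distrib)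
  also have "\<dots> = (\<Sum>y\<in>A. \<Sum>x\<in>A. if f y = f x then p x * h y / real (card {z\<in>A. f z = f x}) else 0)"
    by (rule sum.swap)
  also have "\<dots> = (\<Sum>y\<in>A. p y * h y)"
  proof (rule sum.cong[OF refl])
    fix y assume y: "y \<in> A"
    have "(\<Sum>x\<in>A. if f y = f x then p x * h y / real (card {z\<in>A. f z = f x}) else 0) =
          (\<Sum>x\<in>A. if f x = f y then p y * h y / real (card {z\<in>A. f z = f y}) else 0)"
      by (rule sum.cong) (auto simp: p[OF _ y])
    also have "\<dots> = (\<Sum>x\<in>{x\<in>A. f x = f y}. p y * h y / real (card {z\<in>A. f z = f y}))"
      by (simp only: sum.inter_filter[OF assms(1)])
    also have "\<dots> = p y * h y"
      using y assms(1) by (auto simp: card_gt_0_iff)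
    finally show "(\<Sum>x\<in>A. if f y = f x then p x * h y / real (card {z\<in>A. f z = f x}) else 0) = p y * h y" .
  qed
  finally show ?thesis by simp
qed

lemma card_remove_one_subset:
  assumes "finite X"
  shows "card {v\<in>X. X - {v} \<subseteq> U} = (if X \<subseteq> U then card X else if card (X - U) = 1 then 1 else 0)"
proof (cases "X \<subseteq> U")
  case True
  then have "{v\<in>X. X - {v} \<subseteq> U} = X" by auto
  then show ?thesis using True by simp
next
  case False
  then have eq: "{v\<in>X. X - {v} \<subseteq> U} = {v. X - U = {v}}" by auto
  show ?thesis
  proof (cases "card (X - U) = 1")
    case True
    then obtain w where "X - U = {w}" by (auto simp: card_Suc_eq)
    then show ?thesis using eq True False by simp
  next
    case False
    then have "{v. X - U = {v}} = {}" by auto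
    then show ?thesis unfolding eq using False \<open>\<not> X \<subseteq> U\<close> by simp
  qed
qed

locale oriented_graph =
  fixes V :: "'a set" and E :: "'a set set"
  assumes finite_graph: "finite_graph V E"
begin

abbreviation "\<Omega> \<equiv> orientations E"
abbreviation "snk \<equiv> sinks V E"

definition incident :: "'a set \<Rightarrow> 'a set set" where
  "incident T = {e\<in>E. e \<inter> T \<noteq> {}}"

definition closed_nbhd :: "'a set \<Rightarrow> 'a set" where
  "closed_nbhd T = T \<union> \<Union>(incident T)"

definition patch :: "('a set \<Rightarrow> 'a) \<Rightarrow> 'a set \<Rightarrow> ('a set \<Rightarrow> 'a) \<Rightarrow> 'a set \<Rightarrow> 'a" where
  "patch \<rho> T \<sigma> = (\<lambda>e. if e \<in> incident T then \<rho> e else \<sigma> e)"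

lemma finite_vertices: "finite V"
  using finite_graph by (simp add: finite_graph_def)

lemma edge_subset_vertices: "e \<in> E \<Longrightarrow> e \<subseteq> V"
  using finite_graph by (simp add: finite_graph_def)

lemma card_edge: "e \<in> E \<Longrightarrow> card e = 2"
  using finite_graph by (simp add: finite_graph_def)

lemma finite_edges: "finite E"
  by (rule finite_subset[of E "Pow V"]) (use edge_subset_vertices finite_vertices in auto)

lemma finite_edge: "e \<in> E \<Longrightarrow> finite e"
  using card_edge by (metis card.infinite zero_neq_numeral)

lemma orientations_eq_PiE: "\<Omega> = Pi\<^sub>E E (\<lambda>e. e)"
  unfolding orientations_def PiE_def Pi_def extensional_def by auto

lemma finite_orientations: "finite \<Omega>"
  unfolding orientations_eq_PiE using finite_edges finite_edge by (intro finite_PiE) auto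

lemma orientation_outside_edges: "\<sigma> \<in> \<Omega> \<Longrightarrow> e \<notin> E \<Longrightarrow> \<sigma> e = undefined"
  unfolding orientations_def by auto

lemma orientations_eqI: "\<sigma> \<in> \<Omega> \<Longrightarrow> \<tau> \<in> \<Omega> \<Longrightarrow> (\<And>e. e \<in> E \<Longrightarrow> \<sigma> e = \<tau> e) \<Longrightarrow> \<sigma> = \<tau>"
  using orientation_outside_edges by (metis ext)

lemma card_orientations_agreeing_off:
  assumes "\<sigma> \<in> \<Omega>" "F \<subseteq> E"
  shows "card {\<tau>\<in>\<Omega>. \<forall>e\<in>E - F. \<tau> e = \<sigma> e} = 2 ^ card F"
proof -
  have "{\<tau>\<in>\<Omega>. \<forall>e\<in>E - F. \<tau> e = \<sigma> e} = Pi\<^sub>E E (\<lambda>e. if e \<in> F then e else {\<sigma> e})"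
    using assms(1) unfolding orientations_eq_PiE PiE_def Pi_def extensional_def by auto
  then have "card {\<tau>\<in>\<Omega>. \<forall>e\<in>E - F. \<tau> e = \<sigma> e} = (\<Prod>e\<in>E. card (if e \<in> F then e else {\<sigma> e}))"
    using finite_edges by (simp add: card_PiE)
  also have "\<dots> = (\<Prod>e\<in>E. if e \<in> F then 2 else 1)"
    by (rule prod.cong) (auto simp: card_edge)
  also have "\<dots> = 2 ^ card F"
    using assms(2) finite_edges by (simp add: prod.If_cases Int_absorb1 Int_absorb2)
  finally show ?thesis .
qed

lemma card_orientations: "card \<Omega> = 2 ^ card E"
  using card_orientations_agreeing_off[of _ E] unfolding orientations_eq_PiE
  by (metis (no_types, lifting) finite_edges card_PiE card_edge prod.cong prod_constant)

lemma orientations_nonempty: "\<Omega> \<noteq> {}"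
  using card_orientations by (metis card.empty power_not_zero zero_neq_numeral)


lemma sinks_subset_vertices: "snk \<sigma> \<subseteq> V"
  unfolding sinks_def by auto

lemma finite_sinks: "finite (snk \<sigma>)"
  using sinks_subset_vertices finite_vertices finite_subset by blast

lemma sink_orientation: "v \<in> snk \<sigma> \<Longrightarrow> e \<in> E \<Longrightarrow> v \<in> e \<Longrightarrow> \<sigma> e = v"
  unfolding sinks_def by auto

lemma incident_subset_edges: "incident T \<subseteq> E"
  unfolding incident_def by auto

lemma incident_empty [simp]: "incident {} = {}"
  unfolding incident_def by auto

lemma closed_nbhd_empty [simp]: "closed_nbhd {} = {}"
  unfolding closed_nbhd_def by auto

lemma subset_closed_nbhd: "T \<subseteq> closed_nbhd T"
  unfolding closed_nbhd_def by auto

lemma patch_in_orientations: "\<rho> \<in> \<Omega> \<Longrightarrow> \<sigma> \<in> \<Omega> \<Longrightarrow> patch \<rho> T \<sigma> \<in> \<Omega>"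
  using incident_subset_edges unfolding patch_def orientations_def by auto

lemma patch_eq_iff:
  assumes "\<rho> \<in> \<Omega>" "\<sigma> \<in> \<Omega>" "\<tau> \<in> \<Omega>"
  shows "patch \<rho> T \<sigma> = \<tau> \<longleftrightarrow> (\<forall>e\<in>incident T. \<rho> e = \<tau> e) \<and> (\<forall>e\<in>E - incident T. \<tau> e = \<sigma> e)"
proof
  assume "patch \<rho> T \<sigma> = \<tau>"
  then show "(\<forall>e\<in>incident T. \<rho> e = \<tau> e) \<and> (\<forall>e\<in>E - incident T. \<tau> e = \<sigma> e)"
    unfolding patch_def by auto
next
  assume "(\<forall>e\<in>incident T. \<rho> e = \<tau> e) \<and> (\<forall>e\<in>E - incident T. \<tau> e = \<sigma> e)"
  then show "patch \<rho> T \<sigma> = \<tau>"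
    using orientations_eqI[OF patch_in_orientations[OF assms(1,2)] assms(3)]
    unfolding patch_def by fastforce
qed

lemma sinks_patch:
  assumes "T \<subseteq> snk \<rho>"
  shows "snk (patch \<rho> T \<sigma>) = T \<union> (snk \<sigma> - closed_nbhd T)"
proof (rule set_eqI)
  fix v
  show "v \<in> snk (patch \<rho> T \<sigma>) \<longleftrightarrow> v \<in> T \<union> (snk \<sigma> - closed_nbhd T)"
  proof (cases "v \<in> T")
    case True
    then have "e \<in> E \<Longrightarrow> v \<in> e \<Longrightarrow> patch \<rho> T \<sigma> e = v" for e
      using assms sink_orientation[of v \<rho> e] unfolding patch_def incident_def by auto
    then show ?thesis
      using True assms sinks_subset_vertices unfolding sinks_def by auto
  next
    case v_notin: False
    show ?thesis
    proof (cases "v \<in> closed_nbhd T")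
      case True
      then obtain e t where "e \<in> incident T" "v \<in> e" "t \<in> e" "t \<in> T"
        using v_notin unfolding closed_nbhd_def incident_def by auto
      moreover then have "patch \<rho> T \<sigma> e = t"
        using assms sink_orientation[of t \<rho> e] unfolding patch_def incident_def by auto
      ultimately show ?thesis
        using True v_notin unfolding sinks_def incident_def by auto
    next
      case False
      then have "e \<in> E \<Longrightarrow> v \<in> e \<Longrightarrow> patch \<rho> T \<sigma> e = \<sigma> e" for e
        unfolding patch_def closed_nbhd_def by auto
      then show ?thesis
        using False v_notin unfolding sinks_def by auto
    qed
  qed
qed

lemma sinks_patch_eq_iff:
  "T \<subseteq> snk \<rho> \<Longrightarrow> snk (patch \<rho> T \<sigma>) = T \<longleftrightarrow> snk \<sigma> \<subseteq> closed_nbhd T"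
  using sinks_patch subset_closed_nbhd by blast

lemma eq_patch_iff:
  assumes "\<rho> \<in> \<Omega>" "T \<subseteq> snk \<rho>" "\<sigma> \<in> \<Omega>" "\<tau> \<in> \<Omega>"
  shows "T \<subseteq> snk \<tau> \<and> (\<forall>e\<in>E - incident T. \<tau> e = \<sigma> e) \<longleftrightarrow> \<tau> = patch \<rho> T \<sigma>"
proof
  assume \<tau>: "T \<subseteq> snk \<tau> \<and> (\<forall>e\<in>E - incident T. \<tau> e = \<sigma> e)"
  have "\<rho> e = \<tau> e" if e: "e \<in> incident T" for e
  proof -
    obtain t where t: "t \<in> e" "t \<in> T" and "e \<in> E"
      using e unfolding incident_def by auto
    then have "\<rho> e = t" "\<tau> e = t"
      using \<tau> assms(2) sink_orientation by (metis subsetD)+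
    then show ?thesis by simp
  qed
  then show "\<tau> = patch \<rho> T \<sigma>"
    using \<tau> patch_eq_iff[OF assms(1,3,4), of T] by (metis ballI)
next
  assume "\<tau> = patch \<rho> T \<sigma>"
  then show "T \<subseteq> snk \<tau> \<and> (\<forall>e\<in>E - incident T. \<tau> e = \<sigma> e)"
    using sinks_patch[OF assms(2)] unfolding patch_def by auto
qed

lemma pmf_resample:
  assumes "\<sigma> \<in> \<Omega>"
  shows "pmf (resample E S \<sigma>) \<tau> =
    (if \<tau> \<in> \<Omega> \<and> (\<forall>e\<in>E - incident S. \<tau> e = \<sigma> e) then 1 / 2 ^ card (incident S) else 0)"
proof -
  have resample: "resample E S \<sigma> = map_pmf (\<lambda>\<rho>. patch \<rho> S \<sigma>) (pmf_of_set \<Omega>)"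
    unfolding resample_def patch_def incident_def by simp
  have pmf: "pmf (resample E S \<sigma>) \<tau> = card (\<Omega> \<inter> (\<lambda>\<rho>. patch \<rho> S \<sigma>) -` {\<tau>}) / card \<Omega>"
    unfolding resample pmf_map using finite_orientations orientations_nonempty
    by (simp add: measure_pmf_of_set)
  show ?thesis
  proof (cases "\<tau> \<in> \<Omega> \<and> (\<forall>e\<in>E - incident S. \<tau> e = \<sigma> e)")
    case True
    then have "\<Omega> \<inter> (\<lambda>\<rho>. patch \<rho> S \<sigma>) -` {\<tau>} = {\<rho>\<in>\<Omega>. \<forall>e\<in>E - (E - incident S). \<rho> e = \<tau> e}"
      using patch_eq_iff[OF _ assms] incident_subset_edges by (auto simp: Diff_Diff_Int Int_absorb1)
    then have "card (\<Omega> \<inter> (\<lambda>\<rho>. patch \<rho> S \<sigma>) -` {\<tau>}) = 2 ^ card (E - incident S)"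
      using card_orientations_agreeing_off[of \<tau> "E - incident S"] True by simp
    moreover have "card E = card (E - incident S) + card (incident S)"
      using incident_subset_edges finite_edges
      by (metis card_Diff_subset card_mono finite_subset le_add_diff_inverse2)
    ultimately show ?thesis
      using True pmf card_orientations by (simp add: power_add)
  next
    case False
    then have "\<Omega> \<inter> (\<lambda>\<rho>. patch \<rho> S \<sigma>) -` {\<tau>} = {}"
      using patch_in_orientations[OF _ assms] unfolding patch_def by auto
    then show ?thesis
      using False pmf by simp
  qed
qed

lemma pmf_prs_step:
  assumes "\<sigma> \<in> \<Omega>"
  shows "pmf (prs_step V E \<sigma>) \<tau> =
    (if \<tau> \<in> \<Omega> \<and> (\<forall>e\<in>E - incident (snk \<sigma>). \<tau> e = \<sigma> e) then 1 / 2 ^ card (incident (snk \<sigma>)) else 0)"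
proof (cases "snk \<sigma> = {}")
  case True
  have "\<tau> \<in> \<Omega> \<and> (\<forall>e\<in>E. \<tau> e = \<sigma> e) \<longleftrightarrow> \<tau> = \<sigma>"
    using assms orientations_eqI by auto
  then show ?thesis
    using True by (simp add: prs_step_def pmf_return)
qed (simp add: prs_step_def pmf_resample[OF assms])


definition num_sinks_within :: "'a set \<Rightarrow> nat" where
  "num_sinks_within U = card {\<sigma>\<in>\<Omega>. snk \<sigma> \<subseteq> U}"

definition num_sink_class :: "'a set \<Rightarrow> nat" where
  "num_sink_class T = card {\<sigma>\<in>\<Omega>. snk \<sigma> = T}"

definition num_one_sink_outside :: "'a set \<Rightarrow> nat" where
  "num_one_sink_outside U = card {\<sigma>\<in>\<Omega>. card (snk \<sigma> - U) = 1}"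

definition num_one_sink_beyond :: "'a set \<Rightarrow> nat" where
  "num_one_sink_beyond T = card {\<sigma>\<in>\<Omega>. T \<subseteq> snk \<sigma> \<and> card (snk \<sigma> - T) = 1}"

lemma num_sink_class_pos: "\<sigma> \<in> \<Omega> \<Longrightarrow> num_sink_class (snk \<sigma>) > 0"
  unfolding num_sink_class_def using finite_orientations by (subst card_gt_0_iff) auto

text \<open>The map \<open>\<sigma> \<mapsto> patch \<rho> T \<sigma>\<close> is \<open>2 ^ card (incident T)\<close>-to-one from all orientations
  onto those in which \<open>T\<close> consists of sinks.\<close>

lemma sum_sinks_patch:
  assumes "\<rho> \<in> \<Omega>" "T \<subseteq> snk \<rho>"
  shows "(\<Sum>\<sigma>\<in>\<Omega>. (\<phi> (T \<union> (snk \<sigma> - closed_nbhd T)) :: real)) =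
         2 ^ card (incident T) * (\<Sum>\<tau>\<in>{\<tau>\<in>\<Omega>. T \<subseteq> snk \<tau>}. \<phi> (snk \<tau>))"
proof -
  let ?A = "{\<tau>\<in>\<Omega>. T \<subseteq> snk \<tau>}"
  let ?agree = "\<lambda>\<sigma> \<tau>. \<forall>e\<in>E - incident T. \<sigma> e = \<tau> e"
  have "2 ^ card (incident T) * (\<Sum>\<tau>\<in>?A. \<phi> (snk \<tau>)) =
        (\<Sum>\<tau>\<in>?A. \<phi> (snk \<tau>) * card {\<sigma>\<in>\<Omega>. ?agree \<sigma> \<tau>})"
    using card_orientations_agreeing_off[OF _ incident_subset_edges]
    by (simp add: sum_distrib_left mult.commute)
  also have "\<dots> = (\<Sum>\<tau>\<in>?A. \<Sum>\<sigma>\<in>\<Omega>. if ?agree \<sigma> \<tau> then \<phi> (snk \<tau>) else 0)"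
    using finite_orientations by (intro sum.cong refl) (simp add: sum.inter_filter[symmetric])
  also have "\<dots> = (\<Sum>\<sigma>\<in>\<Omega>. \<Sum>\<tau>\<in>?A. if ?agree \<sigma> \<tau> then \<phi> (snk \<tau>) else 0)"
    by (rule sum.swap)
  also have "\<dots> = (\<Sum>\<sigma>\<in>\<Omega>. \<phi> (T \<union> (snk \<sigma> - closed_nbhd T)))"
  proof (rule sum.cong[OF refl])
    fix \<sigma> assume \<sigma>: "\<sigma> \<in> \<Omega>"
    have "{\<tau>\<in>?A. ?agree \<sigma> \<tau>} = {patch \<rho> T \<sigma>}"
      using eq_patch_iff[OF assms \<sigma>] patch_in_orientations[OF assms(1) \<sigma>] by (auto simp: eq_commute)
    then have "(\<Sum>\<tau>\<in>?A. if ?agree \<sigma> \<tau> then \<phi> (snk \<tau>) else 0) = \<phi> (snk (patch \<rho> T \<sigma>))"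
      using finite_orientations by (subst sum.inter_filter[symmetric]) auto
    then show "(\<Sum>\<tau>\<in>?A. if ?agree \<sigma> \<tau> then \<phi> (snk \<tau>) else 0) = \<phi> (T \<union> (snk \<sigma> - closed_nbhd T))"
      using sinks_patch[OF assms(2)] by simp
  qed
  finally show ?thesis by simp
qed

lemma num_sinks_within_closed_nbhd:
  assumes "\<rho> \<in> \<Omega>"
  shows "real (num_sinks_within (closed_nbhd (snk \<rho>))) =
         2 ^ card (incident (snk \<rho>)) * real (num_sink_class (snk \<rho>))"
proof -
  let ?T = "snk \<rho>"
  have "{\<tau>\<in>{\<tau>\<in>\<Omega>. ?T \<subseteq> snk \<tau>}. snk \<tau> = ?T} = {\<tau>\<in>\<Omega>. snk \<tau> = ?T}" by auto
  moreover have "?T \<union> (X - closed_nbhd ?T) = ?T \<longleftrightarrow> X \<subseteq> closed_nbhd ?T" for X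
    using subset_closed_nbhd[of ?T] by auto
  ultimately show ?thesis
    using sum_sinks_patch[OF assms order_refl, of "\<lambda>T. if T = ?T then 1 else 0"] finite_orientations
    unfolding num_sinks_within_def num_sink_class_def by (simp add: sum_if_one_eq_card)
qed

lemma num_one_sink_outside_closed_nbhd:
  assumes "\<rho> \<in> \<Omega>" "T \<subseteq> snk \<rho>"
  shows "real (num_one_sink_outside (closed_nbhd T)) = 2 ^ card (incident T) * real (num_one_sink_beyond T)"
proof -
  have "{\<tau>\<in>{\<tau>\<in>\<Omega>. T \<subseteq> snk \<tau>}. card (snk \<tau> - T) = 1} = {\<tau>\<in>\<Omega>. T \<subseteq> snk \<tau> \<and> card (snk \<tau> - T) = 1}"
    by auto
  moreover have "(T \<union> (X - closed_nbhd T)) - T = X - closed_nbhd T" for X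
    using subset_closed_nbhd[of T] by auto
  ultimately show ?thesis
    using sum_sinks_patch[OF assms, of "\<lambda>S. if card (S - T) = 1 then 1 else 0"] finite_orientations
    unfolding num_one_sink_outside_def num_one_sink_beyond_def by (simp add: sum_if_one_eq_card)
qed

text \<open>Among the orientations with the same sink set as \<open>\<rho>\<close>, only the patch of \<open>\<tau>\<close> can step to \<open>\<tau>\<close>.\<close>

lemma sum_pmf_prs_step_sink_class:
  assumes "\<rho> \<in> \<Omega>" "\<tau> \<in> \<Omega>"
  shows "(\<Sum>\<sigma>\<in>{\<sigma>\<in>\<Omega>. snk \<sigma> = snk \<rho>}. pmf (prs_step V E \<sigma>) \<tau>) =
     (if snk \<tau> \<subseteq> closed_nbhd (snk \<rho>) then 1 / 2 ^ card (incident (snk \<rho>)) else 0)"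
proof -
  let ?T = "snk \<rho>"
  let ?c = "1 / 2 ^ card (incident ?T) :: real"
  let ?agree = "\<lambda>\<sigma>. \<forall>e\<in>E - incident ?T. \<tau> e = \<sigma> e"
  have "(\<Sum>\<sigma>\<in>{\<sigma>\<in>\<Omega>. snk \<sigma> = ?T}. pmf (prs_step V E \<sigma>) \<tau>) =
        (\<Sum>\<sigma>\<in>{\<sigma>\<in>\<Omega>. snk \<sigma> = ?T}. if ?agree \<sigma> then ?c else 0)"
    using assms(2) by (intro sum.cong refl) (auto simp: pmf_prs_step)
  also have "\<dots> = (\<Sum>\<sigma>\<in>{\<sigma>\<in>{\<sigma>\<in>\<Omega>. snk \<sigma> = ?T}. ?agree \<sigma>}. ?c)"
    using finite_orientations by (subst sum.inter_filter) auto
  also have "{\<sigma>\<in>{\<sigma>\<in>\<Omega>. snk \<sigma> = ?T}. ?agree \<sigma>} =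
       (if snk \<tau> \<subseteq> closed_nbhd ?T then {patch \<rho> ?T \<tau>} else {})"
  proof -
    have "\<sigma> \<in> {\<sigma>\<in>{\<sigma>\<in>\<Omega>. snk \<sigma> = ?T}. ?agree \<sigma>} \<longleftrightarrow>
          \<sigma> = patch \<rho> ?T \<tau> \<and> snk \<tau> \<subseteq> closed_nbhd ?T" for \<sigma>
      using eq_patch_iff[OF assms(1) order_refl assms(2), of \<sigma>] sinks_patch_eq_iff[of ?T \<rho> \<tau>]
        patch_in_orientations[OF assms] by auto
    then show ?thesis by auto
  qed
  finally show ?thesis by simp
qed

lemma num_sinks_within_closed_nbhd_pos: "\<rho> \<in> \<Omega> \<Longrightarrow> num_sinks_within (closed_nbhd (snk \<rho>)) > 0"
  using num_sinks_within_closed_nbhd num_sink_class_pos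
  by (metis of_nat_0_less_iff mult_pos_pos zero_less_numeral zero_less_power)

lemma sum_expectation_prs_step_sink_class:
  assumes "\<rho> \<in> \<Omega>"
  shows "(\<Sum>\<sigma>\<in>{\<sigma>\<in>\<Omega>. snk \<sigma> = snk \<rho>}. \<Sum>\<tau>\<in>\<Omega>. pmf (prs_step V E \<sigma>) \<tau> * f \<tau>) =
         (\<Sum>\<tau>\<in>{\<tau>\<in>\<Omega>. snk \<tau> \<subseteq> closed_nbhd (snk \<rho>)}. f \<tau>) / 2 ^ card (incident (snk \<rho>))"
proof -
  have "(\<Sum>\<sigma>\<in>{\<sigma>\<in>\<Omega>. snk \<sigma> = snk \<rho>}. \<Sum>\<tau>\<in>\<Omega>. pmf (prs_step V E \<sigma>) \<tau> * f \<tau>) =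
        (\<Sum>\<tau>\<in>\<Omega>. (\<Sum>\<sigma>\<in>{\<sigma>\<in>\<Omega>. snk \<sigma> = snk \<rho>}. pmf (prs_step V E \<sigma>) \<tau>) * f \<tau>)"
    by (subst sum.swap) (simp add: sum_distrib_right)
  also have "\<dots> = (\<Sum>\<tau>\<in>\<Omega>. if snk \<tau> \<subseteq> closed_nbhd (snk \<rho>) then f \<tau> / 2 ^ card (incident (snk \<rho>)) else 0)"
    by (rule sum.cong[OF refl]) (simp add: sum_pmf_prs_step_sink_class[OF assms])
  also have "\<dots> = (\<Sum>\<tau>\<in>{\<tau>\<in>\<Omega>. snk \<tau> \<subseteq> closed_nbhd (snk \<rho>)}. f \<tau> / 2 ^ card (incident (snk \<rho>)))"
    by (rule sum.inter_filter[OF finite_orientations, symmetric])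
  finally show ?thesis
    by (simp add: sum_divide_distrib)
qed

abbreviation prob :: "nat \<Rightarrow> ('a set \<Rightarrow> 'a) \<Rightarrow> real" where
  "prob t \<sigma> \<equiv> pmf (prs_dist V E t) \<sigma>"

lemma prs_dist_Suc: "prs_dist V E (Suc t) = bind_pmf (prs_dist V E t) (prs_step V E)"
  by (simp add: prs_dist_def)

lemma set_pmf_prs_dist: "set_pmf (prs_dist V E t) \<subseteq> \<Omega>"
proof (induction t)
  case 0
  show ?case
    using finite_orientations orientations_nonempty by (simp add: prs_dist_def)
next
  case (Suc t)
  have "set_pmf (prs_step V E \<sigma>) \<subseteq> \<Omega>" if "\<sigma> \<in> \<Omega>" for \<sigma>
    using that by (auto simp: set_pmf_iff pmf_prs_step split: if_splits)
  then show ?case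
    using Suc by (auto simp: prs_dist_Suc)
qed

lemma prob_0: "\<sigma> \<in> \<Omega> \<Longrightarrow> prob 0 \<sigma> = 1 / real (card \<Omega>)"
  unfolding prs_dist_def using finite_orientations orientations_nonempty by auto

lemma prob_Suc: "prob (Suc t) \<tau> = (\<Sum>\<sigma>\<in>\<Omega>. prob t \<sigma> * pmf (prs_step V E \<sigma>) \<tau>)"
proof -
  have "prob (Suc t) \<tau> = (\<integral>\<sigma>. pmf (prs_step V E \<sigma>) \<tau> \<partial>measure_pmf (prs_dist V E t))"
    unfolding prs_dist_Suc pmf_bind ..
  also have "\<dots> = (\<Sum>\<sigma>\<in>\<Omega>. pmf (prs_step V E \<sigma>) \<tau> * prob t \<sigma>)"
    by (rule integral_measure_pmf_real) (use finite_orientations set_pmf_prs_dist in auto)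
  finally show ?thesis by (simp add: mult.commute)
qed

lemma sum_prob: "(\<Sum>\<sigma>\<in>\<Omega>. prob t \<sigma>) = 1"
  using finite_orientations set_pmf_prs_dist by (rule sum_pmf_eq_1)

lemma prob_sink_class_invariant:
  "\<sigma> \<in> \<Omega> \<Longrightarrow> \<tau> \<in> \<Omega> \<Longrightarrow> snk \<sigma> = snk \<tau> \<Longrightarrow> prob t \<sigma> = prob t \<tau>"
proof (induction t arbitrary: \<sigma> \<tau>)
  case 0
  then show ?case by (simp add: prob_0)
next
  case (Suc t)
  have "prob (Suc t) \<tau> = (\<Sum>\<sigma>\<in>\<Omega>. prob t \<sigma> *
          (if snk \<tau> \<subseteq> closed_nbhd (snk \<sigma>) then 1 / 2 ^ card (incident (snk \<sigma>)) else 0) /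
          real (num_sink_class (snk \<sigma>)))"
    if \<tau>: "\<tau> \<in> \<Omega>" for \<tau>
  proof -
    have "prob (Suc t) \<tau> = (\<Sum>\<sigma>\<in>\<Omega>. prob t \<sigma> *
            (\<Sum>\<rho>\<in>{\<rho>\<in>\<Omega>. snk \<rho> = snk \<sigma>}. pmf (prs_step V E \<rho>) \<tau>) / real (num_sink_class (snk \<sigma>)))"
      unfolding prob_Suc num_sink_class_def
      by (rule sum_fibre_average[OF finite_orientations]) (rule Suc.IH)
    then show ?thesis
      by (simp add: sum_pmf_prs_step_sink_class[OF _ \<tau>] cong: sum.cong)
  qed
  then show ?case
    using Suc.prems by simp
qed

text \<open>Given the sink set \<open>T\<close>, the next state is uniform on the orientations whose
  sinks lie in the closed neighbourhood of \<open>T\<close>.\<close>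

lemma sum_prob_Suc:
  "(\<Sum>\<tau>\<in>\<Omega>. prob (Suc t) \<tau> * f \<tau>) =
   (\<Sum>\<sigma>\<in>\<Omega>. prob t \<sigma> * (\<Sum>\<tau>\<in>{\<tau>\<in>\<Omega>. snk \<tau> \<subseteq> closed_nbhd (snk \<sigma>)}. f \<tau>) /
                       real (num_sinks_within (closed_nbhd (snk \<sigma>))))"
proof -
  have "(\<Sum>\<tau>\<in>\<Omega>. prob (Suc t) \<tau> * f \<tau>) = (\<Sum>\<sigma>\<in>\<Omega>. prob t \<sigma> * (\<Sum>\<tau>\<in>\<Omega>. pmf (prs_step V E \<sigma>) \<tau> * f \<tau>))"
    unfolding prob_Suc sum_distrib_right
    by (subst sum.swap) (simp add: sum_distrib_left mult.assoc)
  also have "\<dots> = (\<Sum>\<sigma>\<in>\<Omega>. prob t \<sigma> * (\<Sum>\<rho>\<in>{\<rho>\<in>\<Omega>. snk \<rho> = snk \<sigma>}.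
                      \<Sum>\<tau>\<in>\<Omega>. pmf (prs_step V E \<rho>) \<tau> * f \<tau>) / real (num_sink_class (snk \<sigma>)))"
    unfolding num_sink_class_def
    by (rule sum_fibre_average[OF finite_orientations]) (rule prob_sink_class_invariant)
  also have "\<dots> = (\<Sum>\<sigma>\<in>\<Omega>. prob t \<sigma> * (\<Sum>\<tau>\<in>{\<tau>\<in>\<Omega>. snk \<tau> \<subseteq> closed_nbhd (snk \<sigma>)}. f \<tau>) /
                       real (num_sinks_within (closed_nbhd (snk \<sigma>))))"
    by (intro sum.cong refl)
      (simp add: sum_expectation_prs_step_sink_class num_sinks_within_closed_nbhd)
  finally show ?thesis .
qed

end

locale sink_free_graph = oriented_graph +
  assumes sink_free_exists: "Z_sink 0 V E > 0"
begin

abbreviation "Z0 \<equiv> Z_sink 0 V E"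
abbreviation "Z1 \<equiv> Z_sink 1 V E"

lemma Z0_eq_num_sink_class: "Z0 = num_sink_class {}"
  unfolding Z_sink_def num_sink_class_def using finite_sinks by auto

lemma Z1_eq_num_one_sink_outside: "Z1 = num_one_sink_outside {}"
  unfolding Z_sink_def num_one_sink_outside_def by simp

lemma num_sinks_within_empty: "num_sinks_within {} = Z0"
  unfolding Z0_eq_num_sink_class num_sinks_within_def num_sink_class_def by simp

lemma obtain_sink_free:
  obtains \<tau> where "\<tau> \<in> \<Omega>" "snk \<tau> = {}"
proof -
  have "{\<tau>\<in>\<Omega>. snk \<tau> = {}} \<noteq> {}"
    using sink_free_exists unfolding Z0_eq_num_sink_class num_sink_class_def
    by (metis card.empty less_irrefl)
  then show ?thesis using that by auto
qed

lemma subset_sinks_in_sink_sets: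
  assumes "\<rho> \<in> \<Omega>" "T \<subseteq> snk \<rho>"
  shows "T \<in> snk ` \<Omega>"
proof -
  obtain \<tau> where "\<tau> \<in> \<Omega>" "snk \<tau> = {}"
    by (rule obtain_sink_free)
  then show ?thesis
    using sinks_patch[OF assms(2), of \<tau>] patch_in_orientations[OF assms(1)] by force
qed

lemma card_sink_sets_one_below:
  assumes "\<rho> \<in> \<Omega>"
  shows "card {T\<in>snk ` \<Omega>. T \<subseteq> U \<and> T \<subseteq> snk \<rho> \<and> card (snk \<rho> - T) = 1} =
         card {v\<in>snk \<rho>. snk \<rho> - {v} \<subseteq> U}"
proof -
  let ?X = "snk \<rho>"
  have "{T\<in>snk ` \<Omega>. T \<subseteq> U \<and> T \<subseteq> ?X \<and> card (?X - T) = 1} = (\<lambda>v. ?X - {v}) ` {v\<in>?X. ?X - {v} \<subseteq> U}"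
  proof (rule set_eqI, rule iffI)
    fix T assume T: "T \<in> {T\<in>snk ` \<Omega>. T \<subseteq> U \<and> T \<subseteq> ?X \<and> card (?X - T) = 1}"
    then obtain v where "?X - T = {v}" by (auto simp: card_Suc_eq)
    then have "T = ?X - {v}" "v \<in> ?X" using T by auto
    then show "T \<in> (\<lambda>v. ?X - {v}) ` {v\<in>?X. ?X - {v} \<subseteq> U}" using T by auto
  next
    fix T assume "T \<in> (\<lambda>v. ?X - {v}) ` {v\<in>?X. ?X - {v} \<subseteq> U}"
    then obtain v where v: "v \<in> ?X" "T = ?X - {v}" "?X - {v} \<subseteq> U" by auto
    then have "?X - T = {v}" by auto
    moreover have "T \<in> snk ` \<Omega>" using subset_sinks_in_sink_sets[OF assms] v by auto
    ultimately show "T \<in> {T\<in>snk ` \<Omega>. T \<subseteq> U \<and> T \<subseteq> ?X \<and> card (?X - T) = 1}" using v by auto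
  qed
  moreover have "inj_on (\<lambda>v. ?X - {v}) {v\<in>?X. ?X - {v} \<subseteq> U}"
    by (rule inj_onI) auto
  ultimately show ?thesis by (simp add: card_image)
qed

definition one_sink_ratio :: "'a set \<Rightarrow> real" where
  "one_sink_ratio U = real (num_one_sink_outside U) / real (num_sinks_within U)"

text \<open>Once the sink set is \<open>T\<close>, this is the expected number of sinks still to be resampled,
  the current ones included.\<close>

definition potential :: "'a set \<Rightarrow> real" where
  "potential T = real (card T) + real Z1 / real Z0 - one_sink_ratio (closed_nbhd T)"

lemma potential_empty: "potential {} = 0"
  unfolding potential_def one_sink_ratio_def closed_nbhd_empty num_sinks_within_empty
    Z1_eq_num_one_sink_outside[symmetric] by simp

lemma one_sink_ratio_closed_nbhd:
  "\<rho> \<in> \<Omega> \<Longrightarrow> one_sink_ratio (closed_nbhd (snk \<rho>)) = real (num_one_sink_beyond (snk \<rho>)) / real (num_sink_class (snk \<rho>))"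
  unfolding one_sink_ratio_def
  using num_sinks_within_closed_nbhd num_one_sink_outside_closed_nbhd[OF _ order_refl] by simp

lemma sum_inverse_num_sink_class_one_below:
  assumes "\<rho> \<in> \<Omega>"
  shows "(\<Sum>\<sigma>\<in>{\<sigma>\<in>\<Omega>. snk \<sigma> \<subseteq> U \<and> snk \<sigma> \<subseteq> snk \<rho> \<and> card (snk \<rho> - snk \<sigma>) = 1}.
            1 / real (num_sink_class (snk \<sigma>))) =
         (if snk \<rho> \<subseteq> U then real (card (snk \<rho>)) else 0) + (if card (snk \<rho> - U) = 1 then 1 else 0)"
proof -
  have "(\<Sum>\<sigma>\<in>{\<sigma>\<in>\<Omega>. snk \<sigma> \<subseteq> U \<and> snk \<sigma> \<subseteq> snk \<rho> \<and> card (snk \<rho> - snk \<sigma>) = 1}.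
            1 / real (num_sink_class (snk \<sigma>))) =
        real (card {v\<in>snk \<rho>. snk \<rho> - {v} \<subseteq> U})"
    using sum_inverse_card_fibres[OF finite_orientations,
        where P = "\<lambda>T. T \<subseteq> U \<and> T \<subseteq> snk \<rho> \<and> card (snk \<rho> - T) = 1" and f = snk]
      card_sink_sets_one_below[OF assms] unfolding num_sink_class_def by simp
  also have "\<dots> = (if snk \<rho> \<subseteq> U then real (card (snk \<rho>)) else 0) + (if card (snk \<rho> - U) = 1 then 1 else 0)"
    using card_remove_one_subset[OF finite_sinks, of \<rho> U] by (auto simp: Diff_eq_empty_iff[THEN iffD2])
  finally show ?thesis .
qed


lemma sum_one_sink_ratio_sinks_within:
  "(\<Sum>\<sigma>\<in>{\<sigma>\<in>\<Omega>. snk \<sigma> \<subseteq> U}. one_sink_ratio (closed_nbhd (snk \<sigma>))) =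
   (\<Sum>\<sigma>\<in>{\<sigma>\<in>\<Omega>. snk \<sigma> \<subseteq> U}. real (card (snk \<sigma>))) + real (num_one_sink_outside U)"
proof -
  let ?B = "{\<sigma>\<in>\<Omega>. snk \<sigma> \<subseteq> U}"
  let ?below = "\<lambda>\<sigma> \<rho>. snk \<sigma> \<subseteq> snk \<rho> \<and> card (snk \<rho> - snk \<sigma>) = 1"
  have "(\<Sum>\<sigma>\<in>?B. one_sink_ratio (closed_nbhd (snk \<sigma>))) =
        (\<Sum>\<sigma>\<in>?B. \<Sum>\<rho>\<in>\<Omega>. if ?below \<sigma> \<rho> then 1 / real (num_sink_class (snk \<sigma>)) else 0)"
    using finite_orientations
    by (intro sum.cong refl) (simp add: one_sink_ratio_closed_nbhd num_one_sink_beyond_def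
        sum.inter_filter[symmetric])
  also have "\<dots> = (\<Sum>\<rho>\<in>\<Omega>. \<Sum>\<sigma>\<in>?B. if ?below \<sigma> \<rho> then 1 / real (num_sink_class (snk \<sigma>)) else 0)"
    by (rule sum.swap)
  also have "\<dots> = (\<Sum>\<rho>\<in>\<Omega>. (if snk \<rho> \<subseteq> U then real (card (snk \<rho>)) else 0) +
                            (if card (snk \<rho> - U) = 1 then 1 else 0))"
  proof (rule sum.cong[OF refl])
    fix \<rho> assume \<rho>: "\<rho> \<in> \<Omega>"
    have "{\<sigma>\<in>?B. ?below \<sigma> \<rho>} = {\<sigma>\<in>\<Omega>. snk \<sigma> \<subseteq> U \<and> snk \<sigma> \<subseteq> snk \<rho> \<and> card (snk \<rho> - snk \<sigma>) = 1}"
      by auto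
    then show "(\<Sum>\<sigma>\<in>?B. if ?below \<sigma> \<rho> then 1 / real (num_sink_class (snk \<sigma>)) else 0) =
        (if snk \<rho> \<subseteq> U then real (card (snk \<rho>)) else 0) + (if card (snk \<rho> - U) = 1 then 1 else 0)"
      using sum_inverse_num_sink_class_one_below[OF \<rho>, of U] finite_orientations
      by (simp add: sum.inter_filter[symmetric])
  qed
  also have "\<dots> = (\<Sum>\<sigma>\<in>?B. real (card (snk \<sigma>))) + real (num_one_sink_outside U)"
    unfolding sum.distrib num_one_sink_outside_def using finite_orientations
    by (simp add: sum_if_one_eq_card sum.inter_filter)
  finally show ?thesis .
qed

lemma sum_potential_sinks_within:
  "(\<Sum>\<sigma>\<in>{\<sigma>\<in>\<Omega>. snk \<sigma> \<subseteq> U}. potential (snk \<sigma>)) =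
   real (num_sinks_within U) * real Z1 / real Z0 - real (num_one_sink_outside U)"
  using sum_one_sink_ratio_sinks_within[of U]
  unfolding potential_def num_sinks_within_def by (simp add: sum.distrib sum_subtractf)


definition expected_potential :: "nat \<Rightarrow> real" where
  "expected_potential t = (\<Sum>\<sigma>\<in>\<Omega>. prob t \<sigma> * potential (snk \<sigma>))"

definition expected_sinks :: "nat \<Rightarrow> real" where
  "expected_sinks t = (\<Sum>\<sigma>\<in>\<Omega>. prob t \<sigma> * real (card (snk \<sigma>)))"

definition prob_not_sink_free :: "nat \<Rightarrow> real" where
  "prob_not_sink_free t = (\<Sum>\<sigma>\<in>\<Omega>. prob t \<sigma> * (if snk \<sigma> = {} then 0 else 1))"

lemma expected_potential_0: "expected_potential 0 = real Z1 / real Z0"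
proof -
  have "{\<sigma>\<in>\<Omega>. snk \<sigma> \<subseteq> V} = \<Omega>"
    using sinks_subset_vertices by auto
  moreover have "num_one_sink_outside V = 0"
    unfolding num_one_sink_outside_def using sinks_subset_vertices by (simp add: Diff_eq_empty_iff[THEN iffD2])
  ultimately have "(\<Sum>\<sigma>\<in>\<Omega>. potential (snk \<sigma>)) = real (card \<Omega>) * real Z1 / real Z0"
    using sum_potential_sinks_within[of V] unfolding num_sinks_within_def by simp
  then show ?thesis
    unfolding expected_potential_def using finite_orientations orientations_nonempty
    by (simp add: prob_0 sum_divide_distrib[symmetric])
qed

lemma expected_potential_Suc: "expected_potential (Suc t) = expected_potential t - expected_sinks t"
proof -
  have "(\<Sum>\<tau>\<in>{\<tau>\<in>\<Omega>. snk \<tau> \<subseteq> closed_nbhd (snk \<sigma>)}. potential (snk \<tau>)) /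
          real (num_sinks_within (closed_nbhd (snk \<sigma>))) = potential (snk \<sigma>) - real (card (snk \<sigma>))"
    if "\<sigma> \<in> \<Omega>" for \<sigma>
    unfolding sum_potential_sinks_within using num_sinks_within_closed_nbhd_pos[OF that]
    by (simp add: potential_def one_sink_ratio_def diff_divide_distrib)
  then have "expected_potential (Suc t) = (\<Sum>\<sigma>\<in>\<Omega>. prob t \<sigma> * (potential (snk \<sigma>) - real (card (snk \<sigma>))))"
    unfolding expected_potential_def sum_prob_Suc
    by (intro sum.cong refl) (simp only: times_divide_eq_right[symmetric])
  then show ?thesis
    unfolding expected_potential_def expected_sinks_def by (simp add: right_diff_distrib sum_subtractf)
qed

text \<open>Every round ends sink-free with probability at least \<open>Z0 / card \<Omega>\<close>: the next state is uniform on a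
  set of at most \<open>card \<Omega>\<close> orientations containing all \<open>Z0\<close> sink-free ones.\<close>

lemma fraction_not_sink_free_step:
  assumes "\<sigma> \<in> \<Omega>"
  shows "(\<Sum>\<tau>\<in>{\<tau>\<in>\<Omega>. snk \<tau> \<subseteq> closed_nbhd (snk \<sigma>)}. if snk \<tau> = {} then 0 else 1) /
           real (num_sinks_within (closed_nbhd (snk \<sigma>)))
         \<le> (1 - real Z0 / real (card \<Omega>)) * (if snk \<sigma> = {} then 0 else 1)"
proof -
  let ?W = "num_sinks_within (closed_nbhd (snk \<sigma>))"
  have W_pos: "?W > 0"
    by (rule num_sinks_within_closed_nbhd_pos[OF assms])
  have "{\<tau>\<in>{\<tau>\<in>\<Omega>. snk \<tau> \<subseteq> closed_nbhd (snk \<sigma>)}. snk \<tau> = {}} = {\<tau>\<in>\<Omega>. snk \<tau> = {}}"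
    by auto
  then have "(\<Sum>\<tau>\<in>{\<tau>\<in>\<Omega>. snk \<tau> \<subseteq> closed_nbhd (snk \<sigma>)}. if snk \<tau> = {} then 1 else 0 :: real) = real Z0"
    using finite_orientations
    by (simp add: sum_if_one_eq_card Z0_eq_num_sink_class num_sink_class_def)
  moreover have "(\<Sum>\<tau>\<in>{\<tau>\<in>\<Omega>. snk \<tau> \<subseteq> closed_nbhd (snk \<sigma>)}. if snk \<tau> = {} then 0 else 1 :: real) =
                 (\<Sum>\<tau>\<in>{\<tau>\<in>\<Omega>. snk \<tau> \<subseteq> closed_nbhd (snk \<sigma>)}. 1 - (if snk \<tau> = {} then 1 else 0))"
    by (rule sum.cong) auto
  ultimately have "(\<Sum>\<tau>\<in>{\<tau>\<in>\<Omega>. snk \<tau> \<subseteq> closed_nbhd (snk \<sigma>)}. if snk \<tau> = {} then 0 else 1 :: real) =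
             real ?W - real Z0"
    unfolding sum_subtractf num_sinks_within_def by simp
  then have fraction: "(\<Sum>\<tau>\<in>{\<tau>\<in>\<Omega>. snk \<tau> \<subseteq> closed_nbhd (snk \<sigma>)}. if snk \<tau> = {} then 0 else 1) / real ?W =
                    1 - real Z0 / real ?W"
    using W_pos by (simp add: diff_divide_distrib)
  show ?thesis
  proof (cases "snk \<sigma> = {}")
    case True
    then show ?thesis
      unfolding fraction by (simp add: num_sinks_within_empty sink_free_exists)
  next
    case False
    have "?W \<le> card \<Omega>"
      unfolding num_sinks_within_def using finite_orientations by (intro card_mono) auto
    then have "real Z0 / real (card \<Omega>) \<le> real Z0 / real ?W"
      using W_pos by (intro divide_left_mono) auto
    then show ?thesis
      unfolding fraction using False by simp
  qed
qed


lemma prob_not_sink_free_le: "prob_not_sink_free t \<le> (1 - real Z0 / real (card \<Omega>)) ^ t"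
proof (induction t)
  case 0
  have "prob_not_sink_free 0 \<le> (\<Sum>\<sigma>\<in>\<Omega>. prob 0 \<sigma>)"
    unfolding prob_not_sink_free_def by (rule sum_mono) simp
  then show ?case
    using sum_prob by simp
next
  case (Suc t)
  have "Z0 \<le> card \<Omega>"
    using finite_orientations unfolding Z_sink_def by (intro card_mono) auto
  then have decay: "0 \<le> 1 - real Z0 / real (card \<Omega>)"
    using orientations_nonempty finite_orientations by (simp add: card_gt_0_iff)
  have "prob_not_sink_free (Suc t) \<le>
        (\<Sum>\<sigma>\<in>\<Omega>. (1 - real Z0 / real (card \<Omega>)) * (prob t \<sigma> * (if snk \<sigma> = {} then 0 else 1)))"
    unfolding prob_not_sink_free_def sum_prob_Suc
  proof (rule sum_mono)
    fix \<sigma> assume "\<sigma> \<in> \<Omega>"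
    from mult_left_mono[OF fraction_not_sink_free_step[OF this] pmf_nonneg]
    show "prob t \<sigma> * (\<Sum>\<tau>\<in>{\<tau>\<in>\<Omega>. snk \<tau> \<subseteq> closed_nbhd (snk \<sigma>)}. if snk \<tau> = {} then 0 else 1) /
            real (num_sinks_within (closed_nbhd (snk \<sigma>)))
          \<le> (1 - real Z0 / real (card \<Omega>)) * (prob t \<sigma> * (if snk \<sigma> = {} then 0 else 1))"
      by (simp only: times_divide_eq_right mult.left_commute)
  qed
  also have "\<dots> = (1 - real Z0 / real (card \<Omega>)) * prob_not_sink_free t"
    unfolding prob_not_sink_free_def by (simp add: sum_distrib_left)
  also have "\<dots> \<le> (1 - real Z0 / real (card \<Omega>)) ^ Suc t"
    using Suc decay by (simp add: mult_left_mono)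
  finally show ?case .
qed

lemma expected_potential_tendsto_0: "expected_potential \<longlonglongrightarrow> 0"
proof -
  let ?M = "\<Sum>\<sigma>\<in>\<Omega>. \<bar>potential (snk \<sigma>)\<bar>"
  let ?q = "1 - real Z0 / real (card \<Omega>)"
  have bound: "\<bar>expected_potential t\<bar> \<le> ?M * ?q ^ t" for t
  proof -
    have "\<bar>expected_potential t\<bar> \<le> (\<Sum>\<sigma>\<in>\<Omega>. ?M * (prob t \<sigma> * (if snk \<sigma> = {} then 0 else 1)))"
      unfolding expected_potential_def
    proof (rule order_trans[OF sum_abs sum_mono])
      fix \<sigma> assume "\<sigma> \<in> \<Omega>"
      then have "\<bar>potential (snk \<sigma>)\<bar> \<le> ?M * (if snk \<sigma> = {} then 0 else 1)"
        using finite_orientations member_le_sum[of \<sigma> \<Omega> "\<lambda>\<sigma>. \<bar>potential (snk \<sigma>)\<bar>"]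
        by (auto simp: potential_empty)
      then have "prob t \<sigma> * \<bar>potential (snk \<sigma>)\<bar> \<le> prob t \<sigma> * (?M * (if snk \<sigma> = {} then 0 else 1))"
        by (rule mult_left_mono) simp
      then show "\<bar>prob t \<sigma> * potential (snk \<sigma>)\<bar> \<le> ?M * (prob t \<sigma> * (if snk \<sigma> = {} then 0 else 1))"
        by (simp only: abs_mult abs_of_nonneg[OF pmf_nonneg] mult.left_commute)
    qed
    also have "\<dots> = ?M * prob_not_sink_free t"
      unfolding prob_not_sink_free_def by (simp add: sum_distrib_left)
    also have "\<dots> \<le> ?M * ?q ^ t"
      by (intro mult_left_mono prob_not_sink_free_le sum_nonneg) auto
    finally show ?thesis .
  qed
  have "0 < Z0" "Z0 \<le> card \<Omega>"
    using sink_free_exists finite_orientations unfolding Z_sink_def by (auto intro: card_mono)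
  then have "norm ?q < 1"
    by simp
  then have "(\<lambda>t. ?M * ?q ^ t) \<longlonglongrightarrow> 0"
    by (simp add: LIMSEQ_power_zero tendsto_mult_right_zero)
  then show ?thesis
    by (rule Lim_null_comparison[OF always_eventually, rotated]) (simp add: bound)
qed

lemma expected_sinks_sums: "expected_sinks sums (real Z1 / real Z0)"
proof -
  have "(\<Sum>i<n. expected_sinks i) = expected_potential 0 - expected_potential n" for n
    by (induction n) (simp_all add: expected_potential_Suc)
  moreover have "(\<lambda>n. expected_potential 0 - expected_potential n) \<longlonglongrightarrow> expected_potential 0 - 0"
    by (intro tendsto_diff tendsto_const expected_potential_tendsto_0)
  ultimately show ?thesis
    unfolding sums_def expected_potential_0 by simp
qed

lemma nn_integral_card_sinks_prs_dist:
  "(\<integral>\<^sup>+ \<sigma>. ennreal (real (card (snk \<sigma>))) \<partial>measure_pmf (prs_dist V E t)) = ennreal (expected_sinks t)"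
proof -
  have "(\<integral>\<^sup>+ \<sigma>. ennreal (real (card (snk \<sigma>))) \<partial>measure_pmf (prs_dist V E t))
      = (\<Sum>\<sigma>\<in>\<Omega>. ennreal (real (card (snk \<sigma>))) * ennreal (prob t \<sigma>))"
    by (rule nn_integral_measure_pmf_support) (use finite_orientations set_pmf_prs_dist in auto)
  also have "\<dots> = ennreal (expected_sinks t)"
    unfolding expected_sinks_def
    by (subst sum_ennreal[symmetric]) (auto intro!: sum.cong simp: ennreal_mult mult.commute)
  finally show ?thesis .
qed

end

theorem theorem16:
  fixes V :: "'a set" and E :: "'a set set"
  assumes "finite_graph V E"
    and "Z_sink 0 V E > 0"
  shows "(\<Sum>t. \<integral>\<^sup>+ \<sigma>. ennreal (real (card (sinks V E \<sigma>))) \<partial>measure_pmf (prs_dist V E t))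
         = ennreal (real (Z_sink 1 V E) / real (Z_sink 0 V E))"
proof -
  interpret sink_free_graph V E
    using assms by unfold_locales
  have "(\<Sum>t. \<integral>\<^sup>+ \<sigma>. ennreal (real (card (sinks V E \<sigma>))) \<partial>measure_pmf (prs_dist V E t)) =
        (\<Sum>t. ennreal (expected_sinks t))"
    by (simp add: nn_integral_card_sinks_prs_dist)
  also have "\<dots> = ennreal (\<Sum>t. expected_sinks t)"
  proof (rule suminf_ennreal2)
    show "0 \<le> expected_sinks t" for t
      unfolding expected_sinks_def by (intro sum_nonneg) simp
    show "summable expected_sinks"
      using expected_sinks_sums by (rule sums_summable)
  qed
  also have "(\<Sum>t. expected_sinks t) = real (Z_sink 1 V E) / real (Z_sink 0 V E)"
    using expected_sinks_sums by (simp add: sums_iff)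
  finally show ?thesis .
qed

end
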